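(* Let $\mathcal{C}$ be an isoclinism class of finite-dimensional Lie superalgebras (over a field of characteristic different from $2,3$). Then every $L\in\mathcal{C}$ can be expressed as a direct sum $L=T\oplus A$, where $T$ is a stem Lie superalgebra and $A$ is a finite-dimensional abelian Lie superalgebra.
   Context: Lie superalgebras: $\mathbb{Z}_2$-graded algebras with graded skew-symmetric bracket satisfying the graded Jacobi identity; homomorphisms are even. $Z(L)$ is the center, $L'=[L,L]$; $L$ is stem if $Z(L)\subseteq L'$; abelian means $[L,L]=0$. Two Lie superalgebras $L,M$ are isoclinic if there are isomorphisms $\varphi:L/Z(L)\to M/Z(M)$, $\theta:L'\to M'$ with $\theta([l,m])=[k,r]$ whenever $k+Z(M)=\varphi(l+Z(L))$, $r+Z(M)=\varphi(m+Z(L))$; isoclinism is an equivalence relation whose classes are the isoclinism classes (families). *)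

theory Defs
  imports Complex_Main
begin

text \<open>A Lie superalgebra is modelled on a whole type 'v (an abelian group) with a
scalar multiplication by a field 'k, a Z_2-grading given by two subspaces V0 (even)
and V1 (odd) with 'v = V0 (+) V1 (direct), and a bracket br.\<close>

definition graded_part :: "'v set \<Rightarrow> 'v set \<Rightarrow> nat \<Rightarrow> 'v set" where
  "graded_part V0 V1 i = (if i = 0 then V0 else V1)"

definition lie_superalgebra ::
  "('k::field \<Rightarrow> 'v::ab_group_add \<Rightarrow> 'v) \<Rightarrow> 'v set \<Rightarrow> 'v set \<Rightarrow> ('v \<Rightarrow> 'v \<Rightarrow> 'v) \<Rightarrow> bool" where
  "lie_superalgebra scale V0 V1 br \<longleftrightarrow>
     vector_space scale \<and>
     module.subspace scale V0 \<and> module.subspace scale V1 \<and>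
     V0 \<inter> V1 = {0} \<and> (\<forall>v. \<exists>a\<in>V0. \<exists>b\<in>V1. v = a + b) \<and>
     (\<forall>x y z. br (x + y) z = br x z + br y z \<and> br x (y + z) = br x y + br x z) \<and>
     (\<forall>c x y. br (scale c x) y = scale c (br x y) \<and> br x (scale c y) = scale c (br x y)) \<and>
     (\<forall>i\<in>{0,1}. \<forall>j\<in>{0,1}. \<forall>x\<in>graded_part V0 V1 i. \<forall>y\<in>graded_part V0 V1 j.
        br x y \<in> graded_part V0 V1 ((i + j) mod 2) \<and>
        br x y = - scale ((-1) ^ (i * j)) (br y x)) \<and>
     (\<forall>i\<in>{0,1}. \<forall>j\<in>{0,1}. \<forall>k\<in>{0,1}.
        \<forall>x\<in>graded_part V0 V1 i. \<forall>y\<in>graded_part V0 V1 j. \<forall>z\<in>graded_part V0 V1 k.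
        scale ((-1) ^ (i * k)) (br x (br y z)) + scale ((-1) ^ (j * i)) (br y (br z x))
          + scale ((-1) ^ (k * j)) (br z (br x y)) = 0)"

definition finite_dimensional ::
  "('k::field \<Rightarrow> 'v::ab_group_add \<Rightarrow> 'v) \<Rightarrow> bool" where
  "finite_dimensional scale \<longleftrightarrow> (\<exists>B. finite B \<and> module.span scale B = UNIV)"

definition graded_ideal ::
  "('k::field \<Rightarrow> 'v::ab_group_add \<Rightarrow> 'v) \<Rightarrow> 'v set \<Rightarrow> 'v set \<Rightarrow> ('v \<Rightarrow> 'v \<Rightarrow> 'v) \<Rightarrow> 'v set \<Rightarrow> bool" where
  "graded_ideal scale V0 V1 br I \<longleftrightarrow>
     module.subspace scale I \<and>
     (\<forall>v\<in>I. \<exists>a\<in>I \<inter> V0. \<exists>b\<in>I \<inter> V1. v = a + b) \<and>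
     (\<forall>x y. y \<in> I \<longrightarrow> br x y \<in> I)"

definition center_on :: "('v::ab_group_add \<Rightarrow> 'v \<Rightarrow> 'v) \<Rightarrow> 'v set \<Rightarrow> 'v set" where
  "center_on br S = {x \<in> S. \<forall>y\<in>S. br x y = 0}"

definition derived_on ::
  "('k::field \<Rightarrow> 'v::ab_group_add \<Rightarrow> 'v) \<Rightarrow> ('v \<Rightarrow> 'v \<Rightarrow> 'v) \<Rightarrow> 'v set \<Rightarrow> 'v set" where
  "derived_on scale br S = module.span scale {br x y | x y. x \<in> S \<and> y \<in> S}"

definition stem_on ::
  "('k::field \<Rightarrow> 'v::ab_group_add \<Rightarrow> 'v) \<Rightarrow> ('v \<Rightarrow> 'v \<Rightarrow> 'v) \<Rightarrow> 'v set \<Rightarrow> bool" where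
  "stem_on scale br S \<longleftrightarrow> center_on br S \<subseteq> derived_on scale br S"

definition abelian_on :: "('v::ab_group_add \<Rightarrow> 'v \<Rightarrow> 'v) \<Rightarrow> 'v set \<Rightarrow> bool" where
  "abelian_on br S \<longleftrightarrow> (\<forall>x\<in>S. \<forall>y\<in>S. br x y = 0)"

end

theory Submission
  imports Defs
begin

text \<open>Let \<open>Z\<close> be the centre and \<open>L'\<close> the derived algebra; both are graded, and by
  super-antisymmetry the centre is two-sided.  Choose a graded complement \<open>A\<close> of \<open>Z \<inter> L'\<close>
  in \<open>Z\<close>, and then a graded complement \<open>T\<close> of \<open>A\<close> in \<open>L\<close> containing \<open>L'\<close> (parity by parity,
  by extending bases).  Since \<open>A\<close> is central, \<open>T\<close> and \<open>A\<close> are ideals, \<open>[T, T] = L'\<close> and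
  \<open>Z(T) = Z \<inter> T\<close>; writing \<open>z \<in> Z \<inter> T\<close> as \<open>a + d\<close> with \<open>d \<in> L' \<subseteq> T\<close> forces \<open>a \<in> T \<inter> A = 0\<close>,
  so \<open>Z(T) \<subseteq> [T, T]\<close>.\<close>

lemma (in module) independent_disjoint_span_Int:
  assumes "independent B" "P \<subseteq> B" "Q \<subseteq> B" "P \<inter> Q = {}"
  shows "span P \<inter> span Q = {0}"
proof -
  have "x = 0" if "x \<in> span P" "x \<in> span Q" for x
  proof -
    have "representation B x = representation P x" "representation B x = representation Q x"
      using representation_extend[OF assms(1) that(1) assms(2)]
        representation_extend[OF assms(1) that(2) assms(3)] by simp_all
    then have "representation B x = (\<lambda>b. 0)"
      using representation_ne_zero[of P x] representation_ne_zero[of Q x] assms(4) by fastforce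
    moreover have "x \<in> span B"
      using span_mono[OF assms(2)] that(1) by blast
    ultimately show "x = 0"
      using sum_nonzero_representation_eq[OF assms(1)] by fastforce
  qed
  then show ?thesis
    using span_zero by blast
qed

context vector_space
begin

lemma complement_subspace_exists:
  assumes "subspace X" "subspace W" "X \<subseteq> W"
  obtains T where "subspace T" "T \<subseteq> W" "T \<inter> X = {0}" "\<forall>w\<in>W. \<exists>t\<in>T. \<exists>x\<in>X. w = t + x"
proof -
  obtain BX where BX: "BX \<subseteq> X" "independent BX" "X \<subseteq> span BX"
    by (rule maximal_independent_subset)
  then obtain B where B: "BX \<subseteq> B" "B \<subseteq> W" "independent B" "W \<subseteq> span B"
    using assms(3) by (meson maximal_independent_subset_extend order_trans)
  have span_BX: "span BX = X"
    using span_subspace BX assms(1) by blast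
  show thesis
  proof
    show "subspace (span (B - BX))"
      by simp
    show "span (B - BX) \<subseteq> W"
      using B(2) assms(2) by (meson Diff_subset order_trans span_minimal)
    show "span (B - BX) \<inter> X = {0}"
      using independent_disjoint_span_Int[OF B(3), of "B - BX" BX] B(1) span_BX by auto
    have "span B = span ((B - BX) \<union> BX)"
      using B(1) by (simp add: Un_absorb2)
    then show "\<forall>w\<in>W. \<exists>t\<in>span (B - BX). \<exists>x\<in>X. w = t + x"
      using B(4) unfolding span_Un span_BX by blast
  qed
qed

lemma complement_subspace_superset_exists:
  assumes "subspace U" "subspace X" "subspace W" "U \<subseteq> W" "X \<subseteq> W" "U \<inter> X = {0}"
  obtains T where "subspace T" "U \<subseteq> T" "T \<subseteq> W" "T \<inter> X = {0}"
    "\<forall>w\<in>W. \<exists>t\<in>T. \<exists>x\<in>X. w = t + x"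
proof -
  let ?S = "{u + x | u x. u \<in> U \<and> x \<in> X}"
  have "subspace ?S" "?S \<subseteq> W"
    using subspace_sums[OF assms(1,2)] assms(4,5) subspace_add[OF assms(3)] by auto
  then obtain C where C: "subspace C" "C \<subseteq> W" "C \<inter> ?S = {0}"
    "\<forall>w\<in>W. \<exists>c\<in>C. \<exists>s\<in>?S. w = c + s"
    by (rule complement_subspace_exists[OF _ assms(3)]) blast+
  let ?T = "{u + c | u c. u \<in> U \<and> c \<in> C}"
  show thesis
  proof
    show "subspace ?T"
      by (rule subspace_sums[OF assms(1) C(1)])
    show "U \<subseteq> ?T"
      using subspace_0[OF C(1)] by force
    show "?T \<subseteq> W"
      using C(2) assms(4) subspace_add[OF assms(3)] by blast
    have "v = 0" if v: "v \<in> ?T" "v \<in> X" for v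
    proof -
      obtain u c where uc: "u \<in> U" "c \<in> C" "v = u + c"
        using v(1) by blast
      have "c = - u + v"
        using uc(3) by simp
      then have "c \<in> ?S"
        using subspace_neg[OF assms(1) uc(1)] v(2) by blast
      then have "c = 0"
        using uc(2) C(3) by blast
      then show "v = 0"
        using uc v(2) assms(6) by auto
    qed
    moreover have "0 \<in> ?T"
      using subspace_0[OF assms(1)] subspace_0[OF C(1)] by force
    ultimately show "?T \<inter> X = {0}"
      using subspace_0[OF assms(2)] by blast
    show "\<forall>w\<in>W. \<exists>t\<in>?T. \<exists>x\<in>X. w = t + x"
    proof
      fix w assume "w \<in> W"
      then obtain c u x where "c \<in> C" "u \<in> U" "x \<in> X" "w = c + (u + x)"
        using C(4) by blast
      then show "\<exists>t\<in>?T. \<exists>x\<in>X. w = t + x"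
        by (intro bexI[of _ "u + c"] bexI[of _ x]) (auto simp: ac_simps)
    qed
  qed
qed

end

locale super_vector_space = vector_space scale
  for scale :: "'k::field \<Rightarrow> 'v::ab_group_add \<Rightarrow> 'v" +
  fixes V0 V1 :: "'v set"
  assumes subspace_even: "subspace V0"
    and subspace_odd: "subspace V1"
    and even_Int_odd: "V0 \<inter> V1 = {0}"
    and even_odd_decomp: "\<exists>a\<in>V0. \<exists>b\<in>V1. v = a + b"
begin

definition graded_subspace :: "'v set \<Rightarrow> bool" where
  "graded_subspace S \<longleftrightarrow> subspace S \<and> (\<forall>v\<in>S. \<exists>a\<in>S \<inter> V0. \<exists>b\<in>S \<inter> V1. v = a + b)"

lemma even_odd_decomp_unique:
  assumes "a \<in> V0" "b \<in> V1" "a' \<in> V0" "b' \<in> V1" "a + b = a' + b'"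
  shows "a = a'" "b = b'"
proof -
  have "a - a' = b' - b"
    using assms(5) by (simp add: algebra_simps)
  moreover have "a - a' \<in> V0" "b' - b \<in> V1"
    using subspace_diff subspace_even subspace_odd assms(1-4) by blast+
  ultimately have "a - a' \<in> V0 \<inter> V1" "b' - b \<in> V0 \<inter> V1"
    by simp_all
  then have "a - a' = 0" "b' - b = 0"
    using even_Int_odd by blast+
  then show "a = a'" "b = b'"
    by simp_all
qed

lemma even_odd_add_eq_0:
  assumes "a \<in> V0" "b \<in> V1" "a + b = 0"
  shows "a = 0" "b = 0"
  using even_odd_decomp_unique[of a b 0 0] assms subspace_0 subspace_even subspace_odd by auto

lemma graded_subspace_UNIV: "graded_subspace UNIV"
  using even_odd_decomp by (simp add: graded_subspace_def)

lemma graded_subspace_zero: "graded_subspace {0}"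
  using subspace_0 subspace_even subspace_odd by (auto simp: graded_subspace_def)

lemma graded_subspace_Int:
  assumes "graded_subspace S" "graded_subspace S'"
  shows "graded_subspace (S \<inter> S')"
  unfolding graded_subspace_def
proof (intro conjI ballI)
  show "subspace (S \<inter> S')"
    using assms subspace_inter by (auto simp: graded_subspace_def)
  fix v assume "v \<in> S \<inter> S'"
  then obtain a b a' b' where decomps: "a \<in> S \<inter> V0" "b \<in> S \<inter> V1" "v = a + b"
    "a' \<in> S' \<inter> V0" "b' \<in> S' \<inter> V1" "v = a' + b'"
    using assms unfolding graded_subspace_def by blast
  moreover have "a = a'" "b = b'"
    using even_odd_decomp_unique[of a b a' b'] decomps by auto
  ultimately show "\<exists>a\<in>S \<inter> S' \<inter> V0. \<exists>b\<in>S \<inter> S' \<inter> V1. v = a + b"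
    by blast
qed

lemma graded_subspace_sums:
  assumes "subspace T0" "T0 \<subseteq> V0" "subspace T1" "T1 \<subseteq> V1"
  shows "graded_subspace {t0 + t1 | t0 t1. t0 \<in> T0 \<and> t1 \<in> T1}"
  unfolding graded_subspace_def
proof (intro conjI ballI)
  show "subspace {t0 + t1 | t0 t1. t0 \<in> T0 \<and> t1 \<in> T1}"
    by (rule subspace_sums[OF assms(1,3)])
  have "T0 \<subseteq> {t0 + t1 | t0 t1. t0 \<in> T0 \<and> t1 \<in> T1}"
    "T1 \<subseteq> {t0 + t1 | t0 t1. t0 \<in> T0 \<and> t1 \<in> T1}"
    using subspace_0[OF assms(1)] subspace_0[OF assms(3)] by force+
  then show "\<exists>a\<in>{t0 + t1 | t0 t1. t0 \<in> T0 \<and> t1 \<in> T1} \<inter> V0.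
      \<exists>b\<in>{t0 + t1 | t0 t1. t0 \<in> T0 \<and> t1 \<in> T1} \<inter> V1. v = a + b"
    if "v \<in> {t0 + t1 | t0 t1. t0 \<in> T0 \<and> t1 \<in> T1}" for v
    using that assms(2,4) by blast
qed

lemma graded_complement_exists:
  assumes "graded_subspace U" "graded_subspace X" "graded_subspace W"
    and "U \<subseteq> W" "X \<subseteq> W" "U \<inter> X = {0}"
  obtains T where "graded_subspace T" "U \<subseteq> T" "T \<subseteq> W" "T \<inter> X = {0}"
    "\<forall>w\<in>W. \<exists>t\<in>T. \<exists>x\<in>X. w = t + x"
proof -
  have subspaces: "subspace U" "subspace X" "subspace W"
    using assms(1-3) by (simp_all add: graded_subspace_def)
  have parity_complement: "\<exists>T. subspace T \<and> U \<inter> P \<subseteq> T \<and> T \<subseteq> W \<inter> P \<and> T \<inter> (X \<inter> P) = {0} \<and>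
      (\<forall>w\<in>W \<inter> P. \<exists>t\<in>T. \<exists>x\<in>X \<inter> P. w = t + x)" if "subspace P" for P
  proof -
    have "subspace (U \<inter> P)" "subspace (X \<inter> P)" "subspace (W \<inter> P)"
      using subspaces subspace_inter that by blast+
    moreover have "U \<inter> P \<subseteq> W \<inter> P" "X \<inter> P \<subseteq> W \<inter> P" "U \<inter> P \<inter> (X \<inter> P) = {0}"
      using assms(4-6) subspace_0 that subspaces(1) by auto
    ultimately show ?thesis
      by (metis complement_subspace_superset_exists)
  qed
  obtain T0 where T0: "subspace T0" "U \<inter> V0 \<subseteq> T0" "T0 \<subseteq> W \<inter> V0" "T0 \<inter> (X \<inter> V0) = {0}"
      "\<forall>w\<in>W \<inter> V0. \<exists>t\<in>T0. \<exists>x\<in>X \<inter> V0. w = t + x"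
    using parity_complement[OF subspace_even] by blast
  obtain T1 where T1: "subspace T1" "U \<inter> V1 \<subseteq> T1" "T1 \<subseteq> W \<inter> V1" "T1 \<inter> (X \<inter> V1) = {0}"
      "\<forall>w\<in>W \<inter> V1. \<exists>t\<in>T1. \<exists>x\<in>X \<inter> V1. w = t + x"
    using parity_complement[OF subspace_odd] by blast
  let ?T = "{t0 + t1 | t0 t1. t0 \<in> T0 \<and> t1 \<in> T1}"
  show thesis
  proof
    show "graded_subspace ?T"
      using graded_subspace_sums[OF T0(1) _ T1(1)] T0(3) T1(3) by blast
    show "U \<subseteq> ?T"
    proof
      fix u assume "u \<in> U"
      then obtain u0 u1 where "u0 \<in> U \<inter> V0" "u1 \<in> U \<inter> V1" "u = u0 + u1"
        using assms(1) unfolding graded_subspace_def by blast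
      then show "u \<in> ?T"
        using T0(2) T1(2) by blast
    qed
    show "?T \<subseteq> W"
      using T0(3) T1(3) subspace_add[OF subspaces(3)] by (auto dest!: subsetD)
    have "v = 0" if v: "v \<in> ?T" "v \<in> X" for v
    proof -
      obtain t0 t1 x0 x1 where decomps: "t0 \<in> T0" "t1 \<in> T1" "v = t0 + t1"
        "x0 \<in> X \<inter> V0" "x1 \<in> X \<inter> V1" "v = x0 + x1"
        using v assms(2) unfolding graded_subspace_def by blast
      moreover have "t0 + t1 = x0 + x1"
        using decomps(3,6) by simp
      then have "t0 = x0" "t1 = x1"
        using even_odd_decomp_unique[of t0 t1 x0 x1] decomps T0(3) T1(3) by blast+
      then have "t0 = 0" "t1 = 0"
        using T0(4) T1(4) decomps by blast+
      then show "v = 0"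
        using decomps(3) by simp
    qed
    moreover have "0 \<in> ?T"
      using subspace_0[OF T0(1)] subspace_0[OF T1(1)] by force
    ultimately show "?T \<inter> X = {0}"
      using subspace_0[OF subspaces(2)] by blast
    show "\<forall>w\<in>W. \<exists>t\<in>?T. \<exists>x\<in>X. w = t + x"
    proof
      fix w assume "w \<in> W"
      then obtain w0 w1 where "w0 \<in> W \<inter> V0" "w1 \<in> W \<inter> V1" "w = w0 + w1"
        using assms(3) unfolding graded_subspace_def by blast
      moreover obtain t0 x0 where "t0 \<in> T0" "x0 \<in> X" "w0 = t0 + x0"
        using T0(5) \<open>w0 \<in> W \<inter> V0\<close> by blast
      moreover obtain t1 x1 where "t1 \<in> T1" "x1 \<in> X" "w1 = t1 + x1"
        using T1(5) \<open>w1 \<in> W \<inter> V1\<close> by blast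
      ultimately have "w = (t0 + t1) + (x0 + x1)" "t0 + t1 \<in> ?T" "x0 + x1 \<in> X"
        using subspace_add[OF subspaces(2)] by (auto simp: ac_simps)
      then show "\<exists>t\<in>?T. \<exists>x\<in>X. w = t + x"
        by blast
    qed
  qed
qed

end

locale super_anticommutative_algebra = super_vector_space scale V0 V1
  for scale :: "'k::field \<Rightarrow> 'v::ab_group_add \<Rightarrow> 'v" and V0 V1 +
  fixes br :: "'v \<Rightarrow> 'v \<Rightarrow> 'v"
  assumes bracket_add_left: "br (x + y) z = br x z + br y z"
    and bracket_add_right: "br x (y + z) = br x y + br x z"
    and bracket_scale_left: "br (scale c x) y = scale c (br x y)"
    and bracket_graded_part: "i \<in> {0, 1} \<Longrightarrow> j \<in> {0, 1} \<Longrightarrow>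
      x \<in> graded_part V0 V1 i \<Longrightarrow> y \<in> graded_part V0 V1 j \<Longrightarrow>
      br x y \<in> graded_part V0 V1 ((i + j) mod 2)"
    and bracket_super_antisym: "i \<in> {0, 1} \<Longrightarrow> j \<in> {0, 1} \<Longrightarrow>
      x \<in> graded_part V0 V1 i \<Longrightarrow> y \<in> graded_part V0 V1 j \<Longrightarrow>
      br x y = - scale ((-1) ^ (i * j)) (br y x)"

lemma super_anticommutative_algebra_if_lie_superalgebra:
  assumes "lie_superalgebra scale V0 V1 br"
  shows "super_anticommutative_algebra scale V0 V1 br"
proof -
  have space: "vector_space scale" "module.subspace scale V0" "module.subspace scale V1"
      "V0 \<inter> V1 = {0}" "\<forall>v. \<exists>a\<in>V0. \<exists>b\<in>V1. v = a + b"
    and bilinear: "\<forall>x y z. br (x + y) z = br x z + br y z \<and> br x (y + z) = br x y + br x z"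
      "\<forall>c x y. br (scale c x) y = scale c (br x y) \<and> br x (scale c y) = scale c (br x y)"
    and graded: "\<forall>i\<in>{0,1}. \<forall>j\<in>{0,1}. \<forall>x\<in>graded_part V0 V1 i. \<forall>y\<in>graded_part V0 V1 j.
        br x y \<in> graded_part V0 V1 ((i + j) mod 2) \<and>
        br x y = - scale ((-1) ^ (i * j)) (br y x)"
    using assms unfolding lie_superalgebra_def by blast+
  show ?thesis
  proof (intro super_anticommutative_algebra.intro super_vector_space.intro
      super_vector_space_axioms.intro super_anticommutative_algebra_axioms.intro)
    fix i j :: nat and x y
    assume "i \<in> {0, 1}" "j \<in> {0, 1}" "x \<in> graded_part V0 V1 i" "y \<in> graded_part V0 V1 j"
    then show "br x y \<in> graded_part V0 V1 ((i + j) mod 2)"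
      and "br x y = - scale ((-1) ^ (i * j)) (br y x)"
      using graded by blast+
  qed (use space bilinear in simp_all)
qed

context super_anticommutative_algebra
begin

lemma bracket_zero_left [simp]: "br 0 y = 0"
  using bracket_add_left[of 0 0 y] by simp

lemma bracket_even_even: "x \<in> V0 \<Longrightarrow> y \<in> V0 \<Longrightarrow> br x y \<in> V0"
  and bracket_even_odd: "x \<in> V0 \<Longrightarrow> y \<in> V1 \<Longrightarrow> br x y \<in> V1"
  and bracket_odd_even: "x \<in> V1 \<Longrightarrow> y \<in> V0 \<Longrightarrow> br x y \<in> V1"
  and bracket_odd_odd: "x \<in> V1 \<Longrightarrow> y \<in> V1 \<Longrightarrow> br x y \<in> V0"
  using bracket_graded_part[of 0 0 x y] bracket_graded_part[of 0 1 x y]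
    bracket_graded_part[of 1 0 x y] bracket_graded_part[of 1 1 x y]
  by (simp_all add: graded_part_def)

lemma bracket_eq_0_swap:
  assumes "x \<in> V0 \<union> V1" "y \<in> V0 \<union> V1" "br y x = 0"
  shows "br x y = 0"
proof -
  have "\<exists>i\<in>{0::nat, 1}. v \<in> graded_part V0 V1 i" if v: "v \<in> V0 \<union> V1" for v
    using v unfolding graded_part_def by force
  then obtain i j where "i \<in> {0, 1}" "j \<in> {0, 1}" "x \<in> graded_part V0 V1 i" "y \<in> graded_part V0 V1 j"
    using assms(1,2) by blast
  then show ?thesis
    using bracket_super_antisym[of i j x y] assms(3) by simp
qed

lemma center_graded_subspace: "graded_subspace (center_on br UNIV)"
  unfolding graded_subspace_def
proof (intro conjI ballI)
  show "subspace (center_on br UNIV)"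
    by (simp add: subspace_def center_on_def bracket_add_left bracket_scale_left)
  fix z assume z: "z \<in> center_on br UNIV"
  obtain z0 z1 where parts: "z0 \<in> V0" "z1 \<in> V1" "z = z0 + z1"
    using even_odd_decomp by blast
  have homogeneous: "br z0 y = 0 \<and> br z1 y = 0" if "y \<in> V0 \<union> V1" for y
  proof -
    have sum: "br z0 y + br z1 y = 0"
      using z parts(3) by (simp add: center_on_def bracket_add_left)
    from that show ?thesis
    proof
      assume "y \<in> V0"
      then show ?thesis
        using even_odd_add_eq_0[OF _ _ sum] parts bracket_even_even bracket_odd_even by blast
    next
      assume "y \<in> V1"
      then show ?thesis
        using even_odd_add_eq_0[of "br z1 y" "br z0 y"] sum parts bracket_odd_odd bracket_even_odd
        by (simp add: add.commute)
    qed
  qed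
  have "br z0 y = 0 \<and> br z1 y = 0" for y
  proof -
    obtain y0 y1 where "y0 \<in> V0" "y1 \<in> V1" "y = y0 + y1"
      using even_odd_decomp by blast
    then show ?thesis
      using homogeneous[of y0] homogeneous[of y1] by (simp add: bracket_add_right)
  qed
  then show "\<exists>a\<in>center_on br UNIV \<inter> V0. \<exists>b\<in>center_on br UNIV \<inter> V1. z = a + b"
    using parts by (auto simp: center_on_def)
qed

lemma bracket_center_right:
  assumes "z \<in> center_on br UNIV"
  shows "br y z = 0"
proof -
  obtain z0 z1 where z: "z0 \<in> center_on br UNIV \<inter> V0" "z1 \<in> center_on br UNIV \<inter> V1" "z = z0 + z1"
    using center_graded_subspace assms unfolding graded_subspace_def by blast
  obtain y0 y1 where y: "y0 \<in> V0" "y1 \<in> V1" "y = y0 + y1"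
    using even_odd_decomp by blast
  have "br yi zi = 0" if "yi \<in> {y0, y1}" "zi \<in> {z0, z1}" for yi zi
    using bracket_eq_0_swap[of yi zi] that y z by (auto simp: center_on_def)
  then show ?thesis
    using y(3) z(3) by (simp add: bracket_add_left bracket_add_right)
qed

lemma bracket_in_derived: "br x y \<in> derived_on scale br UNIV"
  unfolding derived_on_def by (rule span_base) blast

lemma derived_graded_subspace: "graded_subspace (derived_on scale br UNIV)"
proof -
  let ?D = "derived_on scale br UNIV"
  let ?G = "{a + b | a b. a \<in> ?D \<inter> V0 \<and> b \<in> ?D \<inter> V1}"
  have D: "subspace ?D" "\<And>x y. br x y \<in> ?D"
    using bracket_in_derived by (simp_all add: derived_on_def)
  have G: "graded_subspace ?G"
    using graded_subspace_sums D(1) subspace_inter subspace_even subspace_odd by blast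
  have "br x y \<in> ?G" for x y
  proof -
    obtain x0 x1 where x: "x0 \<in> V0" "x1 \<in> V1" "x = x0 + x1"
      using even_odd_decomp by blast
    obtain y0 y1 where y: "y0 \<in> V0" "y1 \<in> V1" "y = y0 + y1"
      using even_odd_decomp by blast
    have "br x y = (br x0 y0 + br x1 y1) + (br x0 y1 + br x1 y0)"
      unfolding x y bracket_add_left bracket_add_right by (simp add: ac_simps)
    moreover have "br x0 y0 + br x1 y1 \<in> ?D \<inter> V0" "br x0 y1 + br x1 y0 \<in> ?D \<inter> V1"
      using x y D subspace_add subspace_even subspace_odd
        bracket_even_even bracket_odd_odd bracket_even_odd bracket_odd_even by auto
    ultimately show ?thesis
      by blast
  qed
  then have brackets: "{br x y | x y. x \<in> UNIV \<and> y \<in> UNIV} \<subseteq> ?G"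
    by blast
  have "?D \<subseteq> ?G"
    using span_minimal[OF brackets] G by (simp add: derived_on_def graded_subspace_def)
  moreover have "?G \<subseteq> ?D"
    using subspace_add[OF D(1)] by blast
  ultimately show ?thesis
    using G by (simp add: subset_antisym)
qed

lemma central_complement_exists:
  obtains A where "graded_subspace A" "A \<subseteq> center_on br UNIV"
    "A \<inter> derived_on scale br UNIV = {0}"
    "\<forall>z\<in>center_on br UNIV. \<exists>a\<in>A. \<exists>d\<in>derived_on scale br UNIV. z = a + d"
proof -
  let ?Z = "center_on br UNIV" and ?D = "derived_on scale br UNIV"
  have ZD: "graded_subspace (?Z \<inter> ?D)"
    by (intro graded_subspace_Int center_graded_subspace derived_graded_subspace)
  have "0 \<in> ?Z" "0 \<in> ?D"
    by (simp_all add: center_on_def derived_on_def span_zero)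
  then have "{0} \<subseteq> ?Z" "{0} \<inter> (?Z \<inter> ?D) = {0}"
    by auto
  then obtain A where A: "graded_subspace A" "A \<subseteq> ?Z" "A \<inter> (?Z \<inter> ?D) = {0}"
      "\<forall>z\<in>?Z. \<exists>a\<in>A. \<exists>d\<in>?Z \<inter> ?D. z = a + d"
    by (rule graded_complement_exists[OF graded_subspace_zero ZD center_graded_subspace
          _ Int_lower1]) (rule that)
  moreover have "A \<inter> ?D = {0}" "\<forall>z\<in>?Z. \<exists>a\<in>A. \<exists>d\<in>?D. z = a + d"
    using A(2-4) by blast+
  ultimately show thesis
    using that by blast
qed

lemma graded_ideal_if_derived_subset:
  assumes "graded_subspace T" "derived_on scale br UNIV \<subseteq> T"
  shows "graded_ideal scale V0 V1 br T"
  using assms bracket_in_derived by (auto simp: graded_ideal_def graded_subspace_def)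

lemma graded_ideal_if_central:
  assumes "graded_subspace A" "A \<subseteq> center_on br UNIV"
  shows "graded_ideal scale V0 V1 br A"
  using assms bracket_center_right subspace_0
  by (auto simp: graded_ideal_def graded_subspace_def)

lemma center_on_direct_summand:
  assumes "A \<subseteq> center_on br UNIV" "\<forall>v. \<exists>t\<in>T. \<exists>a\<in>A. v = t + a"
  shows "center_on br T = center_on br UNIV \<inter> T"
proof (intro equalityI subsetI)
  fix x assume x: "x \<in> center_on br T"
  have "br x v = 0" for v
  proof -
    obtain t a where ta: "t \<in> T" "a \<in> A" "v = t + a"
      using assms(2) by blast
    have "br x t = 0"
      using x ta(1) by (simp add: center_on_def)
    moreover have "br x a = 0"
      using bracket_center_right assms(1) ta(2) by blast
    ultimately show ?thesis
      by (simp add: ta(3) bracket_add_right)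
  qed
  then show "x \<in> center_on br UNIV \<inter> T"
    using x by (simp add: center_on_def)
qed (auto simp: center_on_def)

lemma derived_on_direct_summand:
  assumes "A \<subseteq> center_on br UNIV" "\<forall>v. \<exists>t\<in>T. \<exists>a\<in>A. v = t + a"
  shows "derived_on scale br T = derived_on scale br UNIV"
proof -
  have "br u v \<in> {br x y | x y. x \<in> T \<and> y \<in> T}" for u v
  proof -
    obtain t a t' a' where parts: "t \<in> T" "a \<in> A" "u = t + a" "t' \<in> T" "a' \<in> A" "v = t' + a'"
      using assms(2) by meson
    have "a \<in> center_on br UNIV" "a' \<in> center_on br UNIV"
      using assms(1) parts(2,5) by blast+
    then have "br t a' = 0" "br a t' = 0" "br a a' = 0"
      by (auto simp: center_on_def intro: bracket_center_right)
    then have "br u v = br t t'"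
      by (simp add: parts(3,6) bracket_add_left bracket_add_right)
    then show ?thesis
      using parts(1,4) by blast
  qed
  then have "{br x y | x y. x \<in> UNIV \<and> y \<in> UNIV} = {br x y | x y. x \<in> T \<and> y \<in> T}"
    by blast
  then show ?thesis
    by (simp add: derived_on_def)
qed

lemma stem_on_complement_of_central:
  assumes "A \<subseteq> center_on br UNIV" "\<forall>v. \<exists>t\<in>T. \<exists>a\<in>A. v = t + a"
    and "subspace T" "T \<inter> A = {0}" "derived_on scale br UNIV \<subseteq> T"
    and "\<forall>z\<in>center_on br UNIV. \<exists>a\<in>A. \<exists>d\<in>derived_on scale br UNIV. z = a + d"
  shows "stem_on scale br T"
  unfolding stem_on_def center_on_direct_summand[OF assms(1,2)]
    derived_on_direct_summand[OF assms(1,2)]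
proof
  fix x assume x: "x \<in> center_on br UNIV \<inter> T"
  then obtain a d where ad: "a \<in> A" "d \<in> derived_on scale br UNIV" "x = a + d"
    using assms(6) by blast
  have "a = x - d"
    using ad(3) by simp
  then have "a \<in> T"
    using x ad(2) assms(3,5) subspace_diff by blast
  then have "a = 0"
    using ad(1) assms(4) by blast
  then show "x \<in> derived_on scale br UNIV"
    using ad by simp
qed

end

theorem theorem3p7:
  fixes scale :: "'k::field \<Rightarrow> 'v::ab_group_add \<Rightarrow> 'v"
    and V0 V1 :: "'v set" and br :: "'v \<Rightarrow> 'v \<Rightarrow> 'v"
  assumes "(2::'k) \<noteq> 0" and "(3::'k) \<noteq> 0"
    and "lie_superalgebra scale V0 V1 br"
    and "finite_dimensional scale"
  shows "\<exists>T A. graded_ideal scale V0 V1 br T \<and> graded_ideal scale V0 V1 br A \<and>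
           T \<inter> A = {0} \<and> (\<forall>v. \<exists>t\<in>T. \<exists>a\<in>A. v = t + a) \<and>
           stem_on scale br T \<and> abelian_on br A"
proof -
  interpret super_anticommutative_algebra scale V0 V1 br
    by (rule super_anticommutative_algebra_if_lie_superalgebra) (fact assms(3))
  obtain A where A: "graded_subspace A" "A \<subseteq> center_on br UNIV"
      "A \<inter> derived_on scale br UNIV = {0}"
      "\<forall>z\<in>center_on br UNIV. \<exists>a\<in>A. \<exists>d\<in>derived_on scale br UNIV. z = a + d"
    by (rule central_complement_exists)
  obtain T where T: "graded_subspace T" "derived_on scale br UNIV \<subseteq> T" "T \<inter> A = {0}"
      "\<forall>v\<in>UNIV. \<exists>t\<in>T. \<exists>a\<in>A. v = t + a"
    by (rule graded_complement_exists[OF derived_graded_subspace A(1) graded_subspace_UNIV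
          subset_UNIV subset_UNIV]) (use A(3) in blast)+
  have "subspace T"
    using T(1) by (simp add: graded_subspace_def)
  then have "stem_on scale br T"
    using stem_on_complement_of_central[OF A(2)] T(2-4) A(4) by simp
  moreover have "abelian_on br A"
    using A(2) by (auto simp: abelian_on_def center_on_def)
  ultimately show ?thesis
    using graded_ideal_if_derived_subset[OF T(1,2)] graded_ideal_if_central[OF A(1,2)] T(3,4)
    by blast
qed

end
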